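(* Let $\mathrm{H}$ be a Hilbert space and $\Phi=\{\phi_n\}_{n\ge1}$ a sequence of elements of $\mathrm{H}$, with truncations $\Phi_N=\{\phi_n\}_{n=1}^N$ and synthesis map $\mathcal T_N:\mathbb{C}^N\to\mathrm{H}$, $\mathcal T_N\mathbf z=\sum_{n=1}^N z_n\phi_n$. Fix $\epsilon>0$. For each $N$ let $G_N=\{\langle\phi_i,\phi_j\rangle\}_{i,j=1}^N$ be the Gram matrix, with eigen/singular value decomposition $G_N=V\Sigma V^*$, $V$ unitary with columns $v_1,\dots,v_N$ and singular values $\sigma_1,\dots,\sigma_N\ge0$. Define $\mathrm{H}_N^\epsilon\triangleq\operatorname{span}\{\mathcal T_Nv_k:\sigma_k>\epsilon\}$, let $\mathcal P_N^\epsilon f$ be the orthogonal projection of $f\in\mathrm{H}$ onto $\mathrm{H}_N^\epsilon$, and let $\mathbf c^\epsilon_N\in\mathbb{C}^N$ be its coefficient vector obtained as the truncated-SVD regularised solution of $G_N\mathbf c=\mathbf b$, $\mathbf b=\{\langle f,\phi_n\rangle\}_{n=1}^N$, discarding singular values $\le\epsilon$ (so $\mathcal P^\epsilon_Nf=\mathcal T_N\mathbf c^\epsilon_N$). Then for every $f\in\mathrm{H}$ and $N\ge2$, $$\|f-\mathcal P_N^\epsilon f\|_{\mathrm{H}}\le\|f-\mathcal P^\epsilon_{N-1}f\|_{\mathrm{H}}+\sqrt{\epsilon}\,\|\mathbf c^\epsilon_{N-1}\|_{\ell^2(\mathbb{C}^{N-1})}.$$ *)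

theory Defs
  imports Complex_Main "Jordan_Normal_Form.Schur_Decomposition"
begin

text \<open>A Hilbert space is additionally
  of sort complete_space.\<close>

class complex_vector = real_vector +
  fixes scaleC :: "complex \<Rightarrow> 'a \<Rightarrow> 'a"  (infixr \<open>*\<^sub>C\<close> 75)
  assumes scaleC_add_right: "a *\<^sub>C (x + y) = a *\<^sub>C x + a *\<^sub>C y"
    and scaleC_add_left: "(a + b) *\<^sub>C x = a *\<^sub>C x + b *\<^sub>C x"
    and scaleC_scaleC: "a *\<^sub>C (b *\<^sub>C x) = (a * b) *\<^sub>C x"
    and scaleC_one: "1 *\<^sub>C x = x"
    and scaleR_scaleC: "scaleR r x = complex_of_real r *\<^sub>C x"

class complex_inner = complex_vector + real_normed_vector +
  fixes cinner :: "'a \<Rightarrow> 'a \<Rightarrow> complex"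
  assumes cinner_commute: "cinner x y = cnj (cinner y x)"
    and cinner_add_left: "cinner (x + y) z = cinner x z + cinner y z"
    and cinner_scaleC_left: "cinner (a *\<^sub>C x) y = a * cinner x y"
    and cinner_ge_zero: "0 \<le> Re (cinner x x)"
    and cinner_eq_zero_iff: "cinner x x = 0 \<longleftrightarrow> x = 0"
    and norm_eq_sqrt_cinner: "norm x = sqrt (Re (cinner x x))"

definition cspan :: "'a::complex_vector set \<Rightarrow> 'a set" where
  "cspan S = {(\<Sum>x\<in>F. c x *\<^sub>C x) | F c. finite F \<and> F \<subseteq> S}"

definition orth_proj :: "'a::complex_inner set \<Rightarrow> 'a \<Rightarrow> 'a" where
  "orth_proj S f = (THE p. p \<in> S \<and> (\<forall>s\<in>S. cinner (f - p) s = 0))"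

text \<open>The sequence phi_1, phi_2, ... is represented as phi 0, phi 1, ...;
  the truncation Phi_N is phi 0, ..., phi (N-1).\<close>

definition synth :: "(nat \<Rightarrow> 'a::complex_vector) \<Rightarrow> nat \<Rightarrow> complex vec \<Rightarrow> 'a" where
  "synth \<phi> N z = (\<Sum>n<N. (z $ n) *\<^sub>C \<phi> n)"

text \<open>Gram matrix of Phi_N, normalised so that (G c)_i = <T_N c, phi_i>,
  i.e. G = T_N^* T_N (inner product linear in the first argument).\<close>
definition gram :: "(nat \<Rightarrow> 'a::complex_inner) \<Rightarrow> nat \<Rightarrow> complex mat" where
  "gram \<phi> N = mat N N (\<lambda>(i, j). cinner (\<phi> j) (\<phi> i))"

definition data_vec :: "(nat \<Rightarrow> 'a::complex_inner) \<Rightarrow> nat \<Rightarrow> 'a \<Rightarrow> complex vec" where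
  "data_vec \<phi> N f = vec N (\<lambda>i. cinner f (\<phi> i))"

definition unitary_mat :: "nat \<Rightarrow> complex mat \<Rightarrow> bool" where
  "unitary_mat N V \<longleftrightarrow> V \<in> carrier_mat N N \<and> mat_adjoint V * V = 1\<^sub>m N"

definition gram_svd :: "(nat \<Rightarrow> 'a::complex_inner) \<Rightarrow> nat \<Rightarrow> complex mat \<Rightarrow> (nat \<Rightarrow> real) \<Rightarrow> bool" where
  "gram_svd \<phi> N V \<sigma> \<longleftrightarrow> unitary_mat N V \<and> (\<forall>k<N. 0 \<le> \<sigma> k) \<and>
     gram \<phi> N = V * mat_diag N (\<lambda>k. complex_of_real (\<sigma> k)) * mat_adjoint V"

definition H_eps :: "(nat \<Rightarrow> 'a::complex_inner) \<Rightarrow> nat \<Rightarrow> complex mat \<Rightarrow> (nat \<Rightarrow> real) \<Rightarrow> real \<Rightarrow> 'a set" where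
  "H_eps \<phi> N V \<sigma> \<epsilon> = cspan {synth \<phi> N (col V k) | k. k < N \<and> \<epsilon> < \<sigma> k}"

definition tsvd_coeffs :: "(nat \<Rightarrow> 'a::complex_inner) \<Rightarrow> nat \<Rightarrow> complex mat \<Rightarrow> (nat \<Rightarrow> real) \<Rightarrow> real \<Rightarrow> 'a \<Rightarrow> complex vec" where
  "tsvd_coeffs \<phi> N V \<sigma> \<epsilon> f =
     (V * mat_diag N (\<lambda>k. if \<epsilon> < \<sigma> k then complex_of_real (1 / \<sigma> k) else 0) * mat_adjoint V)
       *\<^sub>v data_vec \<phi> N f"

definition l2_norm :: "complex vec \<Rightarrow> real" where
  "l2_norm c = sqrt (\<Sum>i<dim_vec c. (cmod (c $ i))\<^sup>2)"

end

theory Submission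
  imports Defs
begin

text \<open>Write c for the truncated-SVD coefficients at level N - 1, so that
  P^eps_{N-1} f = T_{N-1} c, and c' for c padded with a zero, so that T_N c' = P^eps_{N-1} f
  and |c'| = |c|. Since G_N = V Sigma V^*, the vectors T_N v_k are orthogonal with squared
  norms sigma_k. Splitting V^* c' = w + r according to whether sigma_k > eps, T_N V w lies in
  H^eps_N, while the remainder T_N V r has squared norm sum_k sigma_k |r_k|^2 <= eps |c|^2.
  As P^eps_N f is the best approximation of f from H^eps_N, the triangle inequality through
  T_N c' gives the bound.\<close>

section \<open>Complex inner product spaces\<close>

lemma scaleC_zero_left [simp]: "0 *\<^sub>C x = (0::'a::complex_vector)"
proof -
  have "0 *\<^sub>C x = 0 *\<^sub>C x + 0 *\<^sub>C x" by (metis add_0 scaleC_add_left)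
  then show ?thesis by simp
qed

lemma scaleC_diff_left: "(a - b) *\<^sub>C x = a *\<^sub>C x - b *\<^sub>C (x::'a::complex_vector)"
  by (metis add_diff_cancel diff_add_cancel scaleC_add_left)

lemma scaleC_sum_left: "(\<Sum>i\<in>A. a i) *\<^sub>C x = (\<Sum>i\<in>A. a i *\<^sub>C (x::'a::complex_vector))"
  using sum_comp_morphism[of "\<lambda>a. a *\<^sub>C x" a A] by (simp add: scaleC_add_left o_def)

lemma scaleC_sum_right: "a *\<^sub>C (\<Sum>i\<in>A. x i) = (\<Sum>i\<in>A. a *\<^sub>C (x i::'a::complex_vector))"
proof -
  have "a *\<^sub>C (0::'a) = 0" by (metis add_0 add_cancel_right_right scaleC_add_right)
  then show ?thesis
    using sum_comp_morphism[of "\<lambda>y. a *\<^sub>C y" x A] by (simp add: scaleC_add_right o_def)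
qed

lemma cinner_zero_left [simp]: "cinner 0 (y::'a::complex_inner) = 0"
  by (metis add_0 add_cancel_right_right cinner_add_left)

lemma cinner_zero_right [simp]: "cinner (x::'a::complex_inner) 0 = 0"
  by (metis cinner_commute cinner_zero_left complex_cnj_zero)

lemma cinner_add_right: "cinner (x::'a::complex_inner) (y + z) = cinner x y + cinner x z"
  by (metis cinner_add_left cinner_commute complex_cnj_add)

lemma cinner_scaleC_right: "cinner (x::'a::complex_inner) (a *\<^sub>C y) = cnj a * cinner x y"
  by (metis cinner_commute cinner_scaleC_left complex_cnj_mult)

lemma cinner_diff_left: "cinner (x - y) (z::'a::complex_inner) = cinner x z - cinner y z"
  by (metis add_diff_cancel diff_add_cancel cinner_add_left)

lemma cinner_diff_right: "cinner (x::'a::complex_inner) (y - z) = cinner x y - cinner x z"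
  by (metis add_diff_cancel diff_add_cancel cinner_add_right)

lemma cinner_sum_left: "cinner (\<Sum>i\<in>A. x i) (y::'a::complex_inner) = (\<Sum>i\<in>A. cinner (x i) y)"
  using sum_comp_morphism[of "\<lambda>x. cinner x y" x A] by (simp add: cinner_add_left o_def)

lemma cinner_sum_right: "cinner (x::'a::complex_inner) (\<Sum>i\<in>A. y i) = (\<Sum>i\<in>A. cinner x (y i))"
  using sum_comp_morphism[of "\<lambda>y. cinner x y" y A] by (simp add: cinner_add_right o_def)

lemma power2_norm_eq_cinner: "(norm (x::'a::complex_inner))\<^sup>2 = Re (cinner x x)"
  using cinner_ge_zero[of x] by (simp add: norm_eq_sqrt_cinner)

lemma norm_add_Pythagorean_cinner:
  assumes "cinner x y = 0"
  shows "(norm (x + y))\<^sup>2 = (norm x)\<^sup>2 + (norm (y::'a::complex_inner))\<^sup>2"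
proof -
  have "cinner y x = 0" using assms by (metis cinner_commute complex_cnj_zero)
  then show ?thesis
    using assms by (simp add: power2_norm_eq_cinner cinner_add_left cinner_add_right)
qed

section \<open>Spans and orthogonal projections\<close>

lemma cinner_cspan_eq_0:
  assumes "\<And>s. s \<in> S \<Longrightarrow> cinner (z::'a::complex_inner) s = 0" and "y \<in> cspan S"
  shows "cinner z y = 0"
proof -
  obtain F c where "y = (\<Sum>x\<in>F. c x *\<^sub>C x)" and "F \<subseteq> S"
    using assms(2) unfolding cspan_def by blast
  then show ?thesis
    using assms(1) by (auto simp: cinner_sum_right cinner_scaleC_right intro!: sum.neutral)
qed

lemma sum_in_cspan_image:
  assumes "finite K"
  shows "(\<Sum>k\<in>K. a k *\<^sub>C g k) \<in> cspan (g ` K)"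
proof -
  have "(\<Sum>k\<in>K. a k *\<^sub>C g k) = (\<Sum>x\<in>g ` K. \<Sum>k\<in>{k\<in>K. g k = x}. a k *\<^sub>C g k)"
    using sum.image_gen[OF assms] .
  also have "\<dots> = (\<Sum>x\<in>g ` K. (\<Sum>k\<in>{k\<in>K. g k = x}. a k) *\<^sub>C x)"
    by (simp add: scaleC_sum_left)
  finally show ?thesis
    unfolding cspan_def using assms
    by (intro CollectI exI[of _ "g ` K"] exI[of _ "\<lambda>x. \<Sum>k\<in>{k\<in>K. g k = x}. a k"]) simp
qed

lemma orth_proj_eqI:
  assumes "p \<in> S" and "\<And>s. s \<in> S \<Longrightarrow> cinner (f - p) s = 0"
  shows "orth_proj S (f::'a::complex_inner) = p"
  unfolding orth_proj_def
proof (rule the_equality)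
  show "p \<in> S \<and> (\<forall>s\<in>S. cinner (f - p) s = 0)" using assms by blast
next
  fix q assume q: "q \<in> S \<and> (\<forall>s\<in>S. cinner (f - q) s = 0)"
  have "cinner (q - p) s = 0" if "s \<in> S" for s
    using q assms that cinner_diff_left[of "f - p" "f - q" s] by simp
  then have "cinner (q - p) (q - p) = 0"
    using q assms(1) by (simp add: cinner_diff_right)
  then show "q = p" by (simp add: cinner_eq_zero_iff)
qed

lemma orth_proj_le_dist:
  assumes "p \<in> S" and "\<And>s. s \<in> S \<Longrightarrow> cinner (f - p) s = 0" and "g \<in> S"
  shows "norm ((f::'a::complex_inner) - orth_proj S f) \<le> norm (f - g)"
proof -
  have "cinner (f - p) (p - g) = 0" using assms by (simp add: cinner_diff_right)
  then have "(norm (f - g))\<^sup>2 = (norm (f - p))\<^sup>2 + (norm (p - g))\<^sup>2"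
    using norm_add_Pythagorean_cinner[of "f - p" "p - g"] by simp
  then have "norm (f - p) \<le> norm (f - g)" by (simp add: power2_le_imp_le)
  then show ?thesis using orth_proj_eqI[OF assms(1,2)] by simp
qed

section \<open>Adjoints, unitary matrices and l2 norms\<close>

lemma dim_mat_adjoint [simp]:
  "dim_row (mat_adjoint W) = dim_col W" "dim_col (mat_adjoint W) = dim_row (W::complex mat)"
  unfolding mat_adjoint_def by auto

lemma mat_adjoint_carrier [simp]:
  "W \<in> carrier_mat n m \<Longrightarrow> mat_adjoint (W::complex mat) \<in> carrier_mat m n"
  by auto

lemma index_mat_adjoint:
  "i < dim_col W \<Longrightarrow> j < dim_row W \<Longrightarrow> mat_adjoint (W::complex mat) $$ (i, j) = cnj (W $$ (j, i))"
  unfolding mat_adjoint_def by (simp add: mat_of_rows_index)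

lemma mult_mat_vec_diag:
  "v \<in> carrier_vec n \<Longrightarrow> j < n \<Longrightarrow> (mat_diag n f *\<^sub>v v) $ j = f j * (v $ j :: 'a::comm_ring_1)"
  by (simp add: mat_diag_def scalar_prod_def if_distrib[of "\<lambda>x. x * _"] cong: if_cong)

lemma sum_cnj_mult_mat_vec_adjoint:
  assumes "W \<in> carrier_mat m n" and "y \<in> carrier_vec m" and "z \<in> carrier_vec n"
  shows "(\<Sum>i<m. cnj (y $ i) * (W *\<^sub>v z) $ i) = (\<Sum>j<n. cnj ((mat_adjoint W *\<^sub>v y) $ j) * z $ j)"
proof -
  have "(\<Sum>i<m. cnj (y $ i) * (W *\<^sub>v z) $ i) = (\<Sum>i<m. \<Sum>j<n. cnj (y $ i) * W $$ (i, j) * z $ j)"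
    using assms by (simp add: scalar_prod_def sum_distrib_left mult.assoc atLeast0LessThan)
  also have "\<dots> = (\<Sum>j<n. \<Sum>i<m. cnj (y $ i) * W $$ (i, j) * z $ j)" by (rule sum.swap)
  also have "\<dots> = (\<Sum>j<n. cnj ((mat_adjoint W *\<^sub>v y) $ j) * z $ j)"
  proof (rule sum.cong)
    fix j assume "j \<in> {..<n}"
    then have "(mat_adjoint W *\<^sub>v y) $ j = (\<Sum>i<m. cnj (W $$ (i, j)) * y $ i)"
      using assms by (simp add: scalar_prod_def index_mat_adjoint atLeast0LessThan)
    then show "(\<Sum>i<m. cnj (y $ i) * W $$ (i, j) * z $ j) = cnj ((mat_adjoint W *\<^sub>v y) $ j) * z $ j"
      by (simp add: sum_distrib_left sum_distrib_right ac_simps)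
  qed simp
  finally show ?thesis .
qed

lemma unitary_matD:
  assumes "unitary_mat M W"
  shows "W \<in> carrier_mat M M" and "mat_adjoint W * W = 1\<^sub>m M" and "W * mat_adjoint W = 1\<^sub>m M"
  using assms mat_mult_left_right_inverse[of "mat_adjoint W" M W] unfolding unitary_mat_def by auto

lemma unitary_adjoint_mult_vec_cancel:
  assumes "unitary_mat M W" and "z \<in> carrier_vec M"
  shows "mat_adjoint W *\<^sub>v (W *\<^sub>v z) = z"
  using assms unitary_matD[OF assms(1)] by (simp flip: assoc_mult_mat_vec[of _ M M _ M])

lemma unitary_mult_vec_adjoint_cancel:
  assumes "unitary_mat M W" and "z \<in> carrier_vec M"
  shows "W *\<^sub>v (mat_adjoint W *\<^sub>v z) = z"
  using assms unitary_matD[OF assms(1)] by (simp flip: assoc_mult_mat_vec[of _ M M _ M])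

lemma power2_l2_norm: "c \<in> carrier_vec n \<Longrightarrow> (l2_norm c)\<^sup>2 = (\<Sum>i<n. (cmod (c $ i))\<^sup>2)"
  unfolding l2_norm_def by (simp add: sum_nonneg)

lemma l2_norm_nonneg: "0 \<le> l2_norm c"
  unfolding l2_norm_def by (simp add: sum_nonneg)

lemma l2_norm_unitary_mult_vec:
  assumes "unitary_mat M W" and "u \<in> carrier_vec M"
  shows "l2_norm (W *\<^sub>v u) = l2_norm u"
proof -
  note W = unitary_matD(1)[OF assms(1)]
  have "(\<Sum>i<M. cnj ((W *\<^sub>v u) $ i) * (W *\<^sub>v u) $ i) = (\<Sum>j<M. cnj (u $ j) * u $ j)"
    using sum_cnj_mult_mat_vec_adjoint[OF W _ assms(2), of "W *\<^sub>v u"] W assms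
    by (simp add: unitary_adjoint_mult_vec_cancel)
  then have "(\<Sum>i<M. (W *\<^sub>v u) $ i * cnj ((W *\<^sub>v u) $ i)) = (\<Sum>j<M. u $ j * cnj (u $ j))"
    by (simp add: mult.commute)
  then have "complex_of_real (\<Sum>i<M. (cmod ((W *\<^sub>v u) $ i))\<^sup>2)
      = complex_of_real (\<Sum>j<M. (cmod (u $ j))\<^sup>2)"
    by (simp only: of_real_sum complex_norm_square)
  then have "(\<Sum>i<M. (cmod ((W *\<^sub>v u) $ i))\<^sup>2) = (\<Sum>j<M. (cmod (u $ j))\<^sup>2)"
    by (simp only: of_real_eq_iff)
  then show ?thesis using W assms(2) unfolding l2_norm_def by simp
qed

lemma l2_norm_zero_pad:
  assumes "c \<in> carrier_vec n" and "n \<le> N"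
  shows "l2_norm (vec N (\<lambda>i. if i < n then c $ i else 0)) = l2_norm c"
proof -
  have "(\<Sum>i<N. (cmod (if i < n then c $ i else 0))\<^sup>2) = (\<Sum>i<n. (cmod (c $ i))\<^sup>2)"
    using assms(2) by (intro sum.mono_neutral_cong_right) auto
  then show ?thesis using assms(1) unfolding l2_norm_def by simp
qed

section \<open>The synthesis operator and the Gram matrix\<close>

lemma gram_carrier [simp]: "gram \<phi> M \<in> carrier_mat M M"
  by (simp add: gram_def)

lemma data_vec_carrier [simp]: "data_vec \<phi> M f \<in> carrier_vec M"
  by (simp add: data_vec_def)

lemma cinner_synth_synth:
  assumes "x \<in> carrier_vec M" and "y \<in> carrier_vec M"
  shows "cinner (synth \<phi> M x) (synth \<phi> M y) = (\<Sum>i<M. cnj (y $ i) * (gram \<phi> M *\<^sub>v x) $ i)"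
proof -
  have "cinner (synth \<phi> M x) (synth \<phi> M y) = (\<Sum>i<M. \<Sum>j<M. x $ j * cnj (y $ i) * cinner (\<phi> j) (\<phi> i))"
    unfolding synth_def by (simp add: cinner_sum_left cinner_sum_right cinner_scaleC_left
       cinner_scaleC_right sum_distrib_left mult.assoc mult.left_commute)
  also have "\<dots> = (\<Sum>i<M. cnj (y $ i) * (gram \<phi> M *\<^sub>v x) $ i)"
    using assms by (simp add: gram_def scalar_prod_def sum_distrib_left atLeast0LessThan
        mult.commute mult.left_commute)
  finally show ?thesis .
qed

lemma cinner_synth_right: "cinner f (synth \<phi> M y) = (\<Sum>i<M. cnj (y $ i) * data_vec \<phi> M f $ i)"
  unfolding synth_def data_vec_def by (simp add: cinner_sum_right cinner_scaleC_right)

lemma synth_mult_mat_vec: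
  assumes "W \<in> carrier_mat M K" and "z \<in> carrier_vec K"
  shows "synth \<phi> M (W *\<^sub>v z) = (\<Sum>k<K. z $ k *\<^sub>C synth \<phi> M (col W k))"
proof -
  have "synth \<phi> M (W *\<^sub>v z) = (\<Sum>n<M. \<Sum>k<K. (W $$ (n, k) * z $ k) *\<^sub>C \<phi> n)"
    unfolding synth_def using assms by (simp add: scalar_prod_def scaleC_sum_left atLeast0LessThan)
  also have "\<dots> = (\<Sum>k<K. \<Sum>n<M. (W $$ (n, k) * z $ k) *\<^sub>C \<phi> n)" by (rule sum.swap)
  also have "\<dots> = (\<Sum>k<K. z $ k *\<^sub>C synth \<phi> M (col W k))"
    unfolding synth_def using assms by (simp add: scaleC_sum_right scaleC_scaleC mult.commute)
  finally show ?thesis .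
qed

lemma synth_minus:
  assumes "x \<in> carrier_vec M" and "y \<in> carrier_vec M"
  shows "synth \<phi> M (x - y) = synth \<phi> M x - synth \<phi> M y"
  using assms unfolding synth_def by (simp add: scaleC_diff_left sum_subtractf)

lemma synth_zero_pad:
  assumes "n \<le> N"
  shows "synth \<phi> N (vec N (\<lambda>i. if i < n then c $ i else 0)) = synth \<phi> n c"
  unfolding synth_def using assms by (intro sum.mono_neutral_cong_right) auto

section \<open>Truncated SVD of the Gram matrix\<close>

lemma cinner_synth_gram_svd:
  assumes svd: "gram_svd \<phi> M W \<sigma>" and z: "z \<in> carrier_vec M" and u: "u \<in> carrier_vec M"
  shows "cinner (synth \<phi> M (W *\<^sub>v z)) (synth \<phi> M (W *\<^sub>v u))
       = (\<Sum>k<M. complex_of_real (\<sigma> k) * z $ k * cnj (u $ k))"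
proof -
  let ?D = "mat_diag M (\<lambda>k. complex_of_real (\<sigma> k))"
  have U: "unitary_mat M W" and G: "gram \<phi> M = W * ?D * mat_adjoint W"
    using svd unfolding gram_svd_def by auto
  note W = unitary_matD(1)[OF U]
  have "gram \<phi> M * W = W * ?D * (mat_adjoint W * W)"
    unfolding G using W by (intro assoc_mult_mat[of _ M M _ M _ M]) auto
  then have GW: "gram \<phi> M * W = W * ?D"
    using unitary_matD(2)[OF U] right_mult_one_mat[OF mult_carrier_mat[OF W mat_diag_dim]] by simp
  have "gram \<phi> M *\<^sub>v (W *\<^sub>v z) = (gram \<phi> M * W) *\<^sub>v z"
    by (rule assoc_mult_mat_vec[OF gram_carrier W z, symmetric])
  also have "\<dots> = W *\<^sub>v (?D *\<^sub>v z)"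
    unfolding GW by (rule assoc_mult_mat_vec[OF W mat_diag_dim z])
  finally have "cinner (synth \<phi> M (W *\<^sub>v z)) (synth \<phi> M (W *\<^sub>v u))
      = (\<Sum>i<M. cnj ((W *\<^sub>v u) $ i) * (W *\<^sub>v (?D *\<^sub>v z)) $ i)"
    using W z u by (simp add: cinner_synth_synth)
  also have "\<dots> = (\<Sum>j<M. cnj ((mat_adjoint W *\<^sub>v (W *\<^sub>v u)) $ j) * (?D *\<^sub>v z) $ j)"
    using W u mult_mat_vec_carrier[OF mat_diag_dim z] by (intro sum_cnj_mult_mat_vec_adjoint) auto
  also have "\<dots> = (\<Sum>k<M. complex_of_real (\<sigma> k) * z $ k * cnj (u $ k))"
    using U z u by (simp add: unitary_adjoint_mult_vec_cancel mult_mat_vec_diag mult.commute)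
  finally show ?thesis .
qed

lemma power2_norm_synth_gram_svd:
  assumes "gram_svd \<phi> M W \<sigma>" and "z \<in> carrier_vec M"
  shows "(norm (synth \<phi> M (W *\<^sub>v z)))\<^sup>2 = (\<Sum>k<M. \<sigma> k * (cmod (z $ k))\<^sup>2)"
  using cinner_synth_gram_svd[OF assms assms(2)]
  by (simp add: power2_norm_eq_cinner mult.assoc complex_norm_square[symmetric] flip: of_real_mult)

lemma synth_in_H_eps:
  assumes "W \<in> carrier_mat M M" and "z \<in> carrier_vec M"
    and "\<And>k. k < M \<Longrightarrow> \<not> \<epsilon> < \<sigma> k \<Longrightarrow> z $ k = 0"
  shows "synth \<phi> M (W *\<^sub>v z) \<in> H_eps \<phi> M W \<sigma> \<epsilon>"
proof -
  let ?K = "{k. k < M \<and> \<epsilon> < \<sigma> k}"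
  have "synth \<phi> M (W *\<^sub>v z) = (\<Sum>k\<in>?K. z $ k *\<^sub>C synth \<phi> M (col W k))"
    unfolding synth_mult_mat_vec[OF assms(1,2)] using assms(3)
    by (intro sum.mono_neutral_right) auto
  also have "\<dots> \<in> cspan ((\<lambda>k. synth \<phi> M (col W k)) ` ?K)"
    by (rule sum_in_cspan_image) simp
  also have "(\<lambda>k. synth \<phi> M (col W k)) ` ?K = {synth \<phi> M (col W k) | k. k < M \<and> \<epsilon> < \<sigma> k}"
    by blast
  finally show ?thesis unfolding H_eps_def .
qed

lemma tsvd_coeffs_eq:
  assumes "unitary_mat M W"
  shows "tsvd_coeffs \<phi> M W \<sigma> \<epsilon> f = W *\<^sub>v
    (mat_diag M (\<lambda>k. if \<epsilon> < \<sigma> k then complex_of_real (1 / \<sigma> k) else 0) *\<^sub>v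
      (mat_adjoint W *\<^sub>v data_vec \<phi> M f))"
proof -
  note W = unitary_matD(1)[OF assms]
  let ?D = "mat_diag M (\<lambda>k. if \<epsilon> < \<sigma> k then complex_of_real (1 / \<sigma> k) else 0)"
  have "tsvd_coeffs \<phi> M W \<sigma> \<epsilon> f = (W * ?D) *\<^sub>v (mat_adjoint W *\<^sub>v data_vec \<phi> M f)"
    unfolding tsvd_coeffs_def
    by (rule assoc_mult_mat_vec[OF mult_carrier_mat[OF W mat_diag_dim] mat_adjoint_carrier[OF W]]) simp
  also have "\<dots> = W *\<^sub>v (?D *\<^sub>v (mat_adjoint W *\<^sub>v data_vec \<phi> M f))"
    using W by (intro assoc_mult_mat_vec[OF W mat_diag_dim] mult_mat_vec_carrier) auto
  finally show ?thesis .
qed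

lemma tsvd_coeffs_carrier:
  assumes "unitary_mat M W"
  shows "tsvd_coeffs \<phi> M W \<sigma> \<epsilon> f \<in> carrier_vec M"
  unfolding tsvd_coeffs_def using unitary_matD(1)[OF assms]
  by (intro mult_mat_vec_carrier) auto

lemma synth_tsvd_coeffs_orthogonality:
  assumes svd: "gram_svd \<phi> M W \<sigma>" and "0 \<le> \<epsilon>"
  shows "synth \<phi> M (tsvd_coeffs \<phi> M W \<sigma> \<epsilon> f) \<in> H_eps \<phi> M W \<sigma> \<epsilon>"
    and "\<And>s. s \<in> H_eps \<phi> M W \<sigma> \<epsilon> \<Longrightarrow> cinner (f - synth \<phi> M (tsvd_coeffs \<phi> M W \<sigma> \<epsilon> f)) s = 0"
proof -
  have U: "unitary_mat M W" using svd unfolding gram_svd_def by simp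
  note W = unitary_matD(1)[OF U]
  define b where "b = mat_adjoint W *\<^sub>v data_vec \<phi> M f"
  define z where "z = mat_diag M (\<lambda>k. if \<epsilon> < \<sigma> k then complex_of_real (1 / \<sigma> k) else 0) *\<^sub>v b"
  have b: "b \<in> carrier_vec M" unfolding b_def using W by (intro mult_mat_vec_carrier) auto
  have z: "z \<in> carrier_vec M" unfolding z_def by (rule mult_mat_vec_carrier[OF mat_diag_dim b])
  have z_index: "z $ k = (if \<epsilon> < \<sigma> k then complex_of_real (1 / \<sigma> k) else 0) * b $ k"
    if "k < M" for k
    unfolding z_def using b that by (rule mult_mat_vec_diag)
  have c: "tsvd_coeffs \<phi> M W \<sigma> \<epsilon> f = W *\<^sub>v z"
    unfolding z_def b_def by (rule tsvd_coeffs_eq[OF U])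
  show "synth \<phi> M (tsvd_coeffs \<phi> M W \<sigma> \<epsilon> f) \<in> H_eps \<phi> M W \<sigma> \<epsilon>"
    unfolding c using W z by (rule synth_in_H_eps) (simp add: z_index)
  have "cinner (f - synth \<phi> M (W *\<^sub>v z)) s = 0"
    if s_gen: "s \<in> {synth \<phi> M (col W k) | k. k < M \<and> \<epsilon> < \<sigma> k}" for s
  proof -
    obtain j where j: "j < M" "\<epsilon> < \<sigma> j" and s: "s = synth \<phi> M (col W j)"
      using s_gen by blast
    have col: "col W j = W *\<^sub>v unit_vec M j"
      using W j by (intro eq_vecI) (auto simp: scalar_prod_def unit_vec_def if_distrib[of "\<lambda>x. _ * x"] cong: if_cong)
    have "cinner f s = b $ j"
      using W j unfolding s cinner_synth_right b_def
      by (simp add: scalar_prod_def index_mat_adjoint data_vec_def atLeast0LessThan)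
    moreover have "cinner (synth \<phi> M (W *\<^sub>v z)) s = complex_of_real (\<sigma> j) * z $ j"
      unfolding s col cinner_synth_gram_svd[OF svd z unit_vec_carrier] using j
      by (simp add: unit_vec_def if_distrib[of cnj] if_distrib[of "(*) _"] cong: if_cong)
    moreover have "\<sigma> j \<noteq> 0" using j assms(2) by linarith
    ultimately show ?thesis using j by (simp add: cinner_diff_left z_index)
  qed
  then show "cinner (f - synth \<phi> M (tsvd_coeffs \<phi> M W \<sigma> \<epsilon> f)) s = 0"
    if "s \<in> H_eps \<phi> M W \<sigma> \<epsilon>" for s
    using that unfolding c H_eps_def by (rule cinner_cspan_eq_0)
qed

lemma orth_proj_H_eps:
  assumes "gram_svd \<phi> M W \<sigma>" and "0 \<le> \<epsilon>"
  shows "orth_proj (H_eps \<phi> M W \<sigma> \<epsilon>) f = synth \<phi> M (tsvd_coeffs \<phi> M W \<sigma> \<epsilon> f)"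
  using synth_tsvd_coeffs_orthogonality[OF assms] by (rule orth_proj_eqI)

lemma orth_proj_H_eps_le_dist:
  assumes "gram_svd \<phi> M W \<sigma>" and "0 \<le> \<epsilon>" and "g \<in> H_eps \<phi> M W \<sigma> \<epsilon>"
  shows "norm (f - orth_proj (H_eps \<phi> M W \<sigma> \<epsilon>) f) \<le> norm (f - g)"
  using synth_tsvd_coeffs_orthogonality[OF assms(1,2)] assms(3) by (rule orth_proj_le_dist)

lemma synth_dist_H_eps:
  assumes svd: "gram_svd \<phi> M W \<sigma>" and "0 \<le> \<epsilon>" and x: "x \<in> carrier_vec M"
  obtains g where "g \<in> H_eps \<phi> M W \<sigma> \<epsilon>" and "norm (synth \<phi> M x - g) \<le> sqrt \<epsilon> * l2_norm x"
proof
  have U: "unitary_mat M W" and \<sigma>: "\<And>k. k < M \<Longrightarrow> 0 \<le> \<sigma> k"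
    using svd unfolding gram_svd_def by auto
  note W = unitary_matD(1)[OF U]
  define u where "u = mat_adjoint W *\<^sub>v x"
  define w where "w = vec M (\<lambda>k. if \<epsilon> < \<sigma> k then u $ k else 0)"
  define r where "r = vec M (\<lambda>k. if \<epsilon> < \<sigma> k then 0 else u $ k)"
  have u: "u \<in> carrier_vec M" unfolding u_def by (rule mult_mat_vec_carrier[OF mat_adjoint_carrier[OF W] x])
  have w: "w \<in> carrier_vec M" and r: "r \<in> carrier_vec M" by (simp_all add: w_def r_def)
  have x_eq: "W *\<^sub>v u = x" unfolding u_def by (rule unitary_mult_vec_adjoint_cancel[OF U x])
  have "u - w = r" using u by (intro eq_vecI) (auto simp: w_def r_def)
  then have Wr: "W *\<^sub>v r = x - W *\<^sub>v w"
    using mult_minus_distrib_mat_vec[OF W u w] x_eq by simp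
  have diff: "synth \<phi> M x - synth \<phi> M (W *\<^sub>v w) = synth \<phi> M (W *\<^sub>v r)"
    unfolding Wr by (rule synth_minus[OF x mult_mat_vec_carrier[OF W w], symmetric])
  show "synth \<phi> M (W *\<^sub>v w) \<in> H_eps \<phi> M W \<sigma> \<epsilon>"
    using W w by (rule synth_in_H_eps) (simp add: w_def)
  have "(norm (synth \<phi> M (W *\<^sub>v r)))\<^sup>2 = (\<Sum>k<M. \<sigma> k * (cmod (r $ k))\<^sup>2)"
    by (rule power2_norm_synth_gram_svd[OF svd r])
  also have "\<dots> \<le> (\<Sum>k<M. \<epsilon> * (cmod (u $ k))\<^sup>2)"
    using \<sigma> assms(2) by (intro sum_mono) (auto simp: r_def intro: mult_right_mono)
  also have "\<dots> = \<epsilon> * (l2_norm u)\<^sup>2"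
    by (simp add: sum_distrib_left power2_l2_norm[OF u])
  also have "\<dots> = (sqrt \<epsilon> * l2_norm x)\<^sup>2"
    using assms(2) l2_norm_unitary_mult_vec[OF U u] x_eq by (simp add: power_mult_distrib)
  finally have "(norm (synth \<phi> M x - synth \<phi> M (W *\<^sub>v w)))\<^sup>2 \<le> (sqrt \<epsilon> * l2_norm x)\<^sup>2"
    by (simp only: diff)
  then show "norm (synth \<phi> M x - synth \<phi> M (W *\<^sub>v w)) \<le> sqrt \<epsilon> * l2_norm x"
    by (rule power2_le_imp_le) (simp add: assms(2) l2_norm_nonneg)
qed

theorem theorem1:
  fixes \<phi> :: "nat \<Rightarrow> 'a::{complex_inner, complete_space}"
    and f :: 'a and \<epsilon> :: real and N :: nat
    and V V' :: "complex mat" and \<sigma> \<sigma>' :: "nat \<Rightarrow> real"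
  assumes "\<epsilon> > 0" and "N \<ge> 2"
    and "gram_svd \<phi> N V \<sigma>"
    and "gram_svd \<phi> (N - 1) V' \<sigma>'"
  shows "norm (f - orth_proj (H_eps \<phi> N V \<sigma> \<epsilon>) f)
           \<le> norm (f - orth_proj (H_eps \<phi> (N - 1) V' \<sigma>' \<epsilon>) f)
              + sqrt \<epsilon> * l2_norm (tsvd_coeffs \<phi> (N - 1) V' \<sigma>' \<epsilon> f)"
proof -
  have eps: "0 \<le> \<epsilon>" using assms(1) by simp
  have U': "unitary_mat (N - 1) V'" using assms(4) unfolding gram_svd_def by simp
  define c where "c = tsvd_coeffs \<phi> (N - 1) V' \<sigma>' \<epsilon> f"
  define c' where "c' = vec N (\<lambda>i. if i < N - 1 then c $ i else 0)"
  have c: "c \<in> carrier_vec (N - 1)" unfolding c_def by (rule tsvd_coeffs_carrier[OF U'])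
  have c': "c' \<in> carrier_vec N" by (simp add: c'_def)
  have proj: "synth \<phi> N c' = orth_proj (H_eps \<phi> (N - 1) V' \<sigma>' \<epsilon>) f"
    unfolding c'_def c_def orth_proj_H_eps[OF assms(4) eps] by (rule synth_zero_pad) simp
  have norm_c': "l2_norm c' = l2_norm c"
    unfolding c'_def by (rule l2_norm_zero_pad[OF c]) simp
  obtain g where g: "g \<in> H_eps \<phi> N V \<sigma> \<epsilon>" and dist: "norm (synth \<phi> N c' - g) \<le> sqrt \<epsilon> * l2_norm c'"
    by (rule synth_dist_H_eps[OF assms(3) eps c'])
  have "norm (f - orth_proj (H_eps \<phi> N V \<sigma> \<epsilon>) f) \<le> norm (f - g)"
    by (rule orth_proj_H_eps_le_dist[OF assms(3) eps g])
  also have "\<dots> \<le> norm (f - synth \<phi> N c') + norm (synth \<phi> N c' - g)"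
    using norm_triangle_ineq[of "f - synth \<phi> N c'" "synth \<phi> N c' - g"] by simp
  finally show ?thesis using dist unfolding proj norm_c' c_def by simp
qed

end
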